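(* Consider the discounted repeated power control game with discount factor $\lambda\in(0,1)$ described in the context. Assume that for every $i\in\mathcal{K}$, $$\lambda\le\frac{\eta_i^{\min}\delta(\beta^*,\tilde\gamma)}{\eta_i^{\min}\delta(\beta^*,\tilde\gamma)+\eta_i^{\max}\left[(K-1)f(\beta^* )-\delta(\beta^*,\tilde\gamma)\right]},$$ where $\delta(\beta^*,\tilde\gamma)=\frac{1-(K-1)\tilde\gamma}{\tilde\gamma}f(\tilde\gamma)-\frac{1-(K-1)\beta^*}{\beta^*}f(\beta^* )$. Then, for any distribution of the channel gains, the joint strategy in which each transmitter $i$ plays at stage $t$ the power $\tilde p_i(t)$ as long as all the other players have played the operating point powers $\tilde{\underline{p}}_{-i}$, and the one-shot Nash equilibrium power $p_i^*(t)$ otherwise, is a subgame perfect Nash equilibrium of the discounted repeated game.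
   Context: There are $K\ge2$ transmitters $i\in\mathcal{K}=\{1,\dots,K\}$; $\sigma^2>0$ is the noise variance; transmitter $i$ has rate $R_i>0$ and power set $[0,P_i^{\max}]$. At each stage $t$ transmitter $i$ has channel gain $g_i(t)$ with $|g_i(t)|^2\in[\eta_i^{\min},\eta_i^{\max}]$, $0<\eta_i^{\min}\le\eta_i^{\max}$ (random, with arbitrary distribution; transmitter $i$ knows its own current gain). For a power profile $\underline{p}$, $\mathrm{SINR}_i=\frac{p_i|g_i|^2}{\sum_{j\neq i}p_j|g_j|^2+\sigma^2}$ and the stage utility is $u_i(\underline{p})=\frac{R_i f(\mathrm{SINR}_i)}{p_i}$, with $f$ a common sigmoidal efficiency function, $f(0)=0$. $\beta^*$ is the unique positive solution of $xf'(x)-f(x)=0$ (with $(K-1)\beta^*<1$) and $p_i^*(t)=\frac{\sigma^2}{|g_i(t)|^2}\frac{\beta^*}{1-(K-1)\beta^*}$ is the one-shot Nash equilibrium power. It is assumed that there exists $x_0\in]0,\frac1{K-1}[$ with $\frac{f''(x)}{f'(x)}-\frac{2(K-1)}{1-(K-1)x}$ strictly positive on $]0,x_0[$ and strictly negative on $]x_0,\frac1{K-1}[$; $\tilde\gamma$ is the unique solution in $]0,\frac1{K-1}[$ of $x[1-(K-1)x]f'(x)-f(x)=0$, and the operating point powers are $\tilde p_i(t)=\frac{\sigma^2}{|g_i(t)|^2}\frac{\tilde\gamma}{1-(K-1)\tilde\gamma}$. Powers $p_i^*,\tilde p_i$ lie in $[0,P_i^{\max}]$. At each stage every transmitter observes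 the public signal $\omega(t)=\sigma^2+\sum_{i=1}^K|g_i(t)|^2p_i(t)$ (deviations from the operating point are detected through it). A pure strategy of transmitter $i$ is a sequence of maps $\tau_{i,t}$ from histories $(\omega(1),\dots,\omega(t-1),p_i(1),\dots,p_i(t-1))$ (together with the current own channel gain) to $[0,P_i^{\max}]$. The payoff of transmitter $i$ is the (expected) discounted sum $v_i^\lambda(\underline\tau)=\sum_{t=1}^\infty\lambda(1-\lambda)^{t-1}u_i(\underline{p}(t))$, where $\underline{p}(t)$ is the profile induced by $\underline\tau$. A joint strategy is a Nash equilibrium if no transmitter can increase its payoff by unilaterally deviating; it is subgame perfect if it induces a Nash equilibrium after every possible history. *)

theory Defs
  imports "HOL-Analysis.Analysis"
begin

text \<open>Transmitters are the naturals i < K.  A power profile / gain vector is a function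
  nat => real; G t i stands for the squared channel modulus |g_i(t)|^2 at stage t
  (stages are indexed from 0).\<close>

definition sigmoidal :: "(real \<Rightarrow> real) \<Rightarrow> bool" where
  "sigmoidal f \<longleftrightarrow> f 0 = 0 \<and> continuous_on {0..} f \<and> strict_mono_on {0..} f \<and>
     (f \<longlongrightarrow> 1) at_top \<and> (\<exists>c>0. convex_on {0..c} f \<and> concave_on {c..} f)"

definition SINR :: "nat \<Rightarrow> real \<Rightarrow> (nat \<Rightarrow> real) \<Rightarrow> (nat \<Rightarrow> real) \<Rightarrow> nat \<Rightarrow> real" where
  "SINR K \<sigma>2 h p i = p i * h i / ((\<Sum>j\<in>{..<K} - {i}. p j * h j) + \<sigma>2)"

definition utility :: "nat \<Rightarrow> real \<Rightarrow> (real \<Rightarrow> real) \<Rightarrow> (nat \<Rightarrow> real) \<Rightarrow> (nat \<Rightarrow> real)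
    \<Rightarrow> (nat \<Rightarrow> real) \<Rightarrow> nat \<Rightarrow> real" where
  "utility K \<sigma>2 f R h p i = R i * f (SINR K \<sigma>2 h p i) / p i"

definition signal :: "nat \<Rightarrow> real \<Rightarrow> (nat \<Rightarrow> real) \<Rightarrow> (nat \<Rightarrow> real) \<Rightarrow> real" where
  "signal K \<sigma>2 h p = \<sigma>2 + (\<Sum>j<K. h j * p j)"

text \<open>A pure strategy: stage t, past public signals, own past powers, current own gain.\<close>
type_synonym strategy = "nat \<Rightarrow> real list \<Rightarrow> real list \<Rightarrow> real \<Rightarrow> real"

text \<open>History (signals, own powers of every player) after m further stages of play,
  starting from the initial history h0.\<close>
fun history :: "nat \<Rightarrow> real \<Rightarrow> (nat \<Rightarrow> strategy) \<Rightarrow> (nat \<Rightarrow> nat \<Rightarrow> real)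
    \<Rightarrow> real list \<times> (nat \<Rightarrow> real list) \<Rightarrow> nat \<Rightarrow> real list \<times> (nat \<Rightarrow> real list)" where
  "history K \<sigma>2 \<tau> G h0 0 = h0"
| "history K \<sigma>2 \<tau> G h0 (Suc m) =
     (let (ws, ps) = history K \<sigma>2 \<tau> G h0 m; t = length ws;
          p = (\<lambda>i. \<tau> i t ws (ps i) (G t i))
      in (ws @ [signal K \<sigma>2 (G t) p], \<lambda>i. ps i @ [p i]))"

definition profile :: "nat \<Rightarrow> real \<Rightarrow> (nat \<Rightarrow> strategy) \<Rightarrow> (nat \<Rightarrow> nat \<Rightarrow> real)
    \<Rightarrow> real list \<times> (nat \<Rightarrow> real list) \<Rightarrow> nat \<Rightarrow> nat \<Rightarrow> real" where
  "profile K \<sigma>2 \<tau> G h0 m =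
     (let (ws, ps) = history K \<sigma>2 \<tau> G h0 m; t = length ws in (\<lambda>i. \<tau> i t ws (ps i) (G t i)))"

definition payoff :: "nat \<Rightarrow> real \<Rightarrow> (real \<Rightarrow> real) \<Rightarrow> (nat \<Rightarrow> real) \<Rightarrow> real
    \<Rightarrow> (nat \<Rightarrow> strategy) \<Rightarrow> (nat \<Rightarrow> nat \<Rightarrow> real) \<Rightarrow> real list \<times> (nat \<Rightarrow> real list) \<Rightarrow> nat \<Rightarrow> real" where
  "payoff K \<sigma>2 f R lam \<tau> G h0 i =
     (\<Sum>m. lam * (1 - lam) ^ m *
        utility K \<sigma>2 f R (G (length (fst h0) + m)) (profile K \<sigma>2 \<tau> G h0 m) i)"

definition past_history :: "nat \<Rightarrow> real \<Rightarrow> (nat \<Rightarrow> nat \<Rightarrow> real) \<Rightarrow> (nat \<Rightarrow> nat \<Rightarrow> real) \<Rightarrow> nat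
    \<Rightarrow> real list \<times> (nat \<Rightarrow> real list)" where
  "past_history K \<sigma>2 G q n =
     (map (\<lambda>s. signal K \<sigma>2 (G s) (q s)) [0..<n], \<lambda>i. map (\<lambda>s. q s i) [0..<n])"

definition valid_strategy :: "(nat \<Rightarrow> real) \<Rightarrow> (nat \<Rightarrow> real) \<Rightarrow> (nat \<Rightarrow> real) \<Rightarrow> nat \<Rightarrow> strategy \<Rightarrow> bool" where
  "valid_strategy Pmax \<eta>min \<eta>max i s \<longleftrightarrow>
     (\<forall>t ws ps h. \<eta>min i \<le> h \<and> h \<le> \<eta>max i \<longrightarrow> 0 \<le> s t ws ps h \<and> s t ws ps h \<le> Pmax i)"

definition admissible_gains :: "nat \<Rightarrow> (nat \<Rightarrow> real) \<Rightarrow> (nat \<Rightarrow> real) \<Rightarrow> (nat \<Rightarrow> nat \<Rightarrow> real) \<Rightarrow> bool" where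
  "admissible_gains K \<eta>min \<eta>max G \<longleftrightarrow> (\<forall>t. \<forall>i<K. \<eta>min i \<le> G t i \<and> G t i \<le> \<eta>max i)"

text \<open>The comparison is made for every realization of the channel gains.\<close>
definition subgame_perfect :: "nat \<Rightarrow> real \<Rightarrow> (real \<Rightarrow> real) \<Rightarrow> (nat \<Rightarrow> real) \<Rightarrow> (nat \<Rightarrow> real)
    \<Rightarrow> (nat \<Rightarrow> real) \<Rightarrow> (nat \<Rightarrow> real) \<Rightarrow> real \<Rightarrow> (nat \<Rightarrow> strategy) \<Rightarrow> bool" where
  "subgame_perfect K \<sigma>2 f R Pmax \<eta>min \<eta>max lam \<tau> \<longleftrightarrow>
     (\<forall>i<K. valid_strategy Pmax \<eta>min \<eta>max i (\<tau> i)) \<and>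
     (\<forall>G. admissible_gains K \<eta>min \<eta>max G \<longrightarrow>
        (\<forall>n q. (\<forall>s<n. \<forall>i<K. 0 \<le> q s i \<and> q s i \<le> Pmax i) \<longrightarrow>
          (\<forall>i<K. \<forall>s. valid_strategy Pmax \<eta>min \<eta>max i s \<longrightarrow>
             payoff K \<sigma>2 f R lam (\<tau>(i := s)) G (past_history K \<sigma>2 G q n) i
               \<le> payoff K \<sigma>2 f R lam \<tau> G (past_history K \<sigma>2 G q n) i)))"

text \<open>The trigger strategy: play the operating point as long as every past public signal
  equals the (gain independent) signal of the operating point, the one-shot Nash power otherwise.\<close>
definition trigger :: "nat \<Rightarrow> real \<Rightarrow> real \<Rightarrow> real \<Rightarrow> nat \<Rightarrow> strategy" where
  "trigger K \<sigma>2 \<beta> \<gamma> i t ws ps h =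
     (if (\<forall>w\<in>set ws. w = \<sigma>2 + (\<Sum>j<K. \<sigma>2 * (\<gamma> / (1 - (real K - 1) * \<gamma>))))
      then \<sigma>2 / h * (\<gamma> / (1 - (real K - 1) * \<gamma>))
      else \<sigma>2 / h * (\<beta> / (1 - (real K - 1) * \<beta>)))"

end

theory Submission
  imports Defs
begin

(* Deviations from the operating point show up at once in the public signal, so a deviator gains
   in a single stage and is punished with the one-shot Nash powers ever after.  If the others
   play the powers that would give everybody the SINR x, the stage utility of player i is at most
   R_i h_i / sigma^2 * (1 - (K-1) x) f(beta) / beta, because f(y)/y is maximal at the tangency
   point beta; on the symmetric profile it equals R_i h_i / sigma^2 * E(x) with
   E(x) = (1 - (K-1) x) f(x) / x.  Hence one deviation gains at most
   R_i eta_max ((K-1) f(beta) - delta) / sigma^2 and costs at least R_i eta_min delta / sigma^2 in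
   every later stage, where delta = E(gamma) - E(beta); the bound on lambda says exactly that the
   discounted loss outweighs the gain.  That delta > 0 comes from the shape of f: the numerator
   x (1 - (K-1) x) f'(x) - f(x) of E' is positive near 0, vanishes in ]0, 1/(K-1)[ only at gamma
   and is negative at beta, so gamma < beta and E decreases on [gamma, beta]. *)

section \<open>Shape of a sigmoidal efficiency function\<close>

lemma sigmoidal_pos:
  assumes "sigmoidal f" "x > 0"
  shows "f x > 0"
  using assms unfolding sigmoidal_def by (metis atLeast_iff less_imp_le order_refl strict_mono_onD)

lemma sigmoidal_nonneg:
  assumes "sigmoidal f" "x \<ge> 0"
  shows "f x \<ge> 0"
  using sigmoidal_pos[OF assms(1), of x] assms unfolding sigmoidal_def by (cases "x = 0") auto

lemma sigmoidal_deriv_nonneg: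
  assumes "sigmoidal f" "(f has_real_derivative D) (at x)" "x > 0"
  shows "D \<ge> 0"
proof -
  have "mono_on {0..} f"
    using assms(1) unfolding sigmoidal_def by (auto intro: strict_mono_on_imp_mono_on)
  with assms(2,3) show ?thesis using mono_on_imp_deriv_nonneg by fastforce
qed

lemma no_root_imp_pos:
  fixes \<phi> :: "real \<Rightarrow> real"
  assumes cont: "\<And>x. a < x \<Longrightarrow> x < b \<Longrightarrow> isCont \<phi> x"
    and no_root: "\<And>x. a < x \<Longrightarrow> x < b \<Longrightarrow> \<phi> x \<noteq> 0"
    and "a < u" "u < b" "a < v" "v < b" "\<phi> u > 0"
  shows "\<phi> v > 0"
proof (rule ccontr)
  assume "\<not> \<phi> v > 0"
  then obtain z where "min u v \<le> z" "z \<le> max u v" "\<phi> z = 0"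
    using IVT[of \<phi> v 0 u] IVT2[of \<phi> v 0 u] assms
    by (cases "u \<le> v") (force simp: min_def max_def)+
  with assms show False by (metis max_less_iff_conj min_less_iff_conj order.strict_trans1 order.strict_trans2)
qed

(* For k = K - 1 the function below is symmetric_efficiency K f, for k = 0 it is f x / x. *)
lemma efficiency_has_derivative:
  assumes "(f has_real_derivative D) (at x)" "x \<noteq> 0"
  shows "((\<lambda>x. (1 - k * x) / x * f x) has_real_derivative
           (x * (1 - k * x) * D - f x) / x\<^sup>2) (at x)"
  using assms by (auto intro!: derivative_eq_intros simp: field_simps power2_eq_square)

lemma efficiency_strict_mono:
  assumes deriv: "\<And>x. x > 0 \<Longrightarrow> (f has_real_derivative f' x) (at x)"
    and "0 < a" "a < b"
    and pos: "\<And>x. a < x \<Longrightarrow> x < b \<Longrightarrow> x * (1 - k * x) * f' x - f x > 0"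
  shows "(1 - k * a) / a * f a < (1 - k * b) / b * f b"
proof -
  have d: "((\<lambda>x. (1 - k * x) / x * f x) has_real_derivative
             (x * (1 - k * x) * f' x - f x) / x\<^sup>2) (at x)" if "x > 0" for x
    using efficiency_has_derivative[OF deriv[OF that]] that by simp
  show ?thesis
  proof (rule DERIV_pos_imp_increasing_open[OF \<open>a < b\<close>])
    show "\<exists>y. ((\<lambda>x. (1 - k * x) / x * f x) has_real_derivative y) (at x) \<and> 0 < y"
      if "a < x" "x < b" for x
    proof (intro exI conjI)
      show "((\<lambda>x. (1 - k * x) / x * f x) has_real_derivative
              (x * (1 - k * x) * f' x - f x) / x\<^sup>2) (at x)"
        using d that \<open>0 < a\<close> by simp
      show "0 < (x * (1 - k * x) * f' x - f x) / x\<^sup>2"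
        using pos that \<open>0 < a\<close> by simp
    qed
    show "continuous_on {a..b} (\<lambda>x. (1 - k * x) / x * f x)"
      using d \<open>0 < a\<close>
      by (intro continuous_at_imp_continuous_on ballI) (meson DERIV_isCont atLeastAtMost_iff order_less_le_trans)
  qed
qed

lemma efficiency_strict_antimono:
  assumes deriv: "\<And>x. x > 0 \<Longrightarrow> (f has_real_derivative f' x) (at x)"
    and "0 < a" "a < b"
    and neg: "\<And>x. a < x \<Longrightarrow> x < b \<Longrightarrow> x * (1 - k * x) * f' x - f x < 0"
  shows "(1 - k * b) / b * f b < (1 - k * a) / a * f a"
  using efficiency_strict_mono[of "\<lambda>x. - f x" "\<lambda>x. - f' x" a b k] assms
  by (auto intro: derivative_intros)

lemma efficiency_numerator_isCont:
  assumes d1: "\<forall>x>0. (f has_real_derivative f' x) (at x)"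
    and d2: "\<forall>x>0. (f' has_real_derivative f'' x) (at x)"
    and "x > 0"
  shows "isCont (\<lambda>x. x * (1 - k * x) * f' x - f x) x"
  using assms by (intro continuous_intros) (auto intro: DERIV_isCont)

lemma tangent_gap_pos_below:
  assumes sig: "sigmoidal f"
    and d1: "\<forall>x>0. (f has_real_derivative f' x) (at x)"
    and d2: "\<forall>x>0. (f' has_real_derivative f'' x) (at x)"
    and beta: "\<beta> > 0" "\<forall>x>0. x * f' x - f x = 0 \<longrightarrow> x = \<beta>"
    and x: "0 < x" "x < \<beta>"
  shows "x * f' x - f x > 0"
proof -
  obtain c where c: "c > 0" "convex_on {0..c} f"
    using sig unfolding sigmoidal_def by blast
  define x1 where "x1 = min c \<beta> / 2"
  have x1: "0 < x1" "x1 < c" "x1 < \<beta>"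
    using c beta(1) unfolding x1_def by auto
  \<comment> \<open>convexity near 0 puts f 0 = 0 above the tangent at x1\<close>
  have "f 0 - f x1 \<ge> f' x1 * (0 - x1)"
  proof (rule convex_on_imp_above_tangent[OF c(2)])
    show "(f has_field_derivative f' x1) (at x1 within {0..c})"
      using d1 x1 by (auto intro: has_field_derivative_at_within)
  qed (use c x1 in auto)
  moreover have "f 0 = 0" using sig unfolding sigmoidal_def by simp
  moreover have "x1 * f' x1 - f x1 \<noteq> 0" using beta(2) x1 by force
  ultimately have "x1 * f' x1 - f x1 > 0" by (simp add: mult.commute)
  then show ?thesis
  proof (rule no_root_imp_pos[of 0 \<beta> "\<lambda>x. x * f' x - f x" x1 x, rotated -1])
    show "isCont (\<lambda>x. x * f' x - f x) y" if "0 < y" for y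
      using efficiency_numerator_isCont[OF d1 d2 that, of 0] by simp
    show "y * f' y - f y \<noteq> 0" if "0 < y" "y < \<beta>" for y
      using beta(2) that by blast
  qed (use x1 x in simp_all)
qed

lemma tangent_gap_neg_above:
  assumes sig: "sigmoidal f"
    and d1: "\<forall>x>0. (f has_real_derivative f' x) (at x)"
    and d2: "\<forall>x>0. (f' has_real_derivative f'' x) (at x)"
    and beta: "\<beta> > 0" "\<forall>x>0. x * f' x - f x = 0 \<longrightarrow> x = \<beta>"
    and x: "\<beta> < x"
  shows "x * f' x - f x < 0"
proof (rule ccontr)
  assume "\<not> x * f' x - f x < 0"
  moreover have "x * f' x - f x \<noteq> 0" using beta x by (metis less_irrefl order.strict_trans)
  ultimately have pos_x: "x * f' x - f x > 0" by simp
  have f_beta: "f \<beta> > 0" using sigmoidal_pos[OF sig beta(1)] .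
  obtain N where N: "\<And>y. y \<ge> N \<Longrightarrow> f y < 2"
    using sig order_tendstoD(2)[of f 1 at_top 2] unfolding sigmoidal_def
    by (auto simp: eventually_at_top_linorder)
  \<comment> \<open>since f is bounded, f y / y eventually drops below f \<beta> / \<beta>\<close>
  define X where "X = max N (max x (2 * \<beta> / f \<beta> + 1))"
  have X: "x \<le> X" "2 * \<beta> / f \<beta> < X" "f X < 2"
    using N unfolding X_def by auto
  have "f X * \<beta> < f \<beta> * X"
  proof -
    have "f X * \<beta> < 2 * \<beta>" using X(3) beta(1) by simp
    also have "\<dots> < f \<beta> * X" using X(2) f_beta by (simp add: field_simps)
    finally show ?thesis .
  qed
  then have "f X / X < f \<beta> / \<beta>"
    using X(1) x beta(1) by (simp add: field_simps)
  moreover have "f \<beta> / \<beta> < f X / X"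
  proof -
    have "y * f' y - f y > 0" if "\<beta> < y" "y < X + 1" for y
    proof (rule no_root_imp_pos[of \<beta> "X + 1" "\<lambda>x. x * f' x - f x" x y, rotated -1])
      show "isCont (\<lambda>x. x * f' x - f x) z" if "\<beta> < z" for z
        using efficiency_numerator_isCont[OF d1 d2, of z 0] beta(1) that by simp
      show "z * f' z - f z \<noteq> 0" if "\<beta> < z" "z < X + 1" for z
        using beta that by (metis less_irrefl order.strict_trans)
    qed (use pos_x x X(1) that in simp_all)
    then have "(1 - 0 * \<beta>) / \<beta> * f \<beta> < (1 - 0 * X) / X * f X"
      by (intro efficiency_strict_mono[where f' = f']) (use d1 beta(1) x X(1) in simp_all)
    then show ?thesis by simp
  qed
  ultimately show False by simp
qed

lemma sigmoidal_ratio_le_tangency: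
  assumes sig: "sigmoidal f"
    and d1: "\<forall>x>0. (f has_real_derivative f' x) (at x)"
    and d2: "\<forall>x>0. (f' has_real_derivative f'' x) (at x)"
    and beta: "\<beta> > 0" "\<forall>x>0. x * f' x - f x = 0 \<longrightarrow> x = \<beta>"
    and x: "x > 0"
  shows "f x / x \<le> f \<beta> / \<beta>"
proof (cases x \<beta> rule: linorder_cases)
  case less
  have "(1 - 0 * x) / x * f x < (1 - 0 * \<beta>) / \<beta> * f \<beta>"
    by (intro efficiency_strict_mono[where f' = f'])
      (use d1 x less tangent_gap_pos_below[OF sig d1 d2 beta] in simp_all)
  then show ?thesis by simp
next
  case greater
  have "(1 - 0 * x) / x * f x < (1 - 0 * \<beta>) / \<beta> * f \<beta>"
    by (intro efficiency_strict_antimono[where f' = f'])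
      (use d1 beta(1) greater tangent_gap_neg_above[OF sig d1 d2 beta] in simp_all)
  then show ?thesis by simp
qed simp

lemma efficiency_numerator_strict_mono_near_zero:
  fixes k :: real
  assumes sig: "sigmoidal f"
    and d1: "\<forall>x>0. (f has_real_derivative f' x) (at x)"
    and d2: "\<forall>x>0. (f' has_real_derivative f'' x) (at x)"
    and k: "k > 0"
    and x0: "x0 < 1 / k" "\<forall>x. 0 < x \<and> x < x0 \<longrightarrow> f'' x / f' x - 2 * k / (1 - k * x) > 0"
    and ab: "0 < a" "a < b" "b < x0"
  shows "a * (1 - k * a) * f' a - f a < b * (1 - k * b) * f' b - f b"
proof (rule DERIV_pos_imp_increasing[OF ab(2)])
  fix x assume x: "a \<le> x" "x \<le> b"
  have "k * x < k * x0" "k * x0 < 1" using x ab k x0(1) by (simp_all add: field_simps)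
  then have below_pole: "0 < 1 - k * x" by simp
  have crit: "2 * k / (1 - k * x) < f'' x / f' x" using x0(2) x ab by force
  have "0 < x" using x ab by simp
  then have "f' x \<ge> 0" using sigmoidal_deriv_nonneg[OF sig] d1 by blast
  moreover have "f' x \<noteq> 0"
  proof
    assume "f' x = 0"
    with crit have "2 * k / (1 - k * x) < 0" by simp
    with below_pole k show False by (simp add: divide_less_0_iff)
  qed
  ultimately have "2 * k * f' x < (1 - k * x) * f'' x"
    using crit below_pole by (simp add: field_simps)
  moreover have "((\<lambda>x. x * (1 - k * x) * f' x - f x) has_real_derivative
      x * ((1 - k * x) * f'' x - 2 * k * f' x)) (at x)"
    using d1 d2 x ab by (auto intro!: derivative_eq_intros simp: algebra_simps)
  ultimately show "\<exists>y. ((\<lambda>x. x * (1 - k * x) * f' x - f x) has_real_derivative y) (at x) \<and> 0 < y"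
    using x ab by force
qed

lemma efficiency_numerator_pos_near_zero:
  fixes k :: real
  assumes sig: "sigmoidal f"
    and d1: "\<forall>x>0. (f has_real_derivative f' x) (at x)"
    and d2: "\<forall>x>0. (f' has_real_derivative f'' x) (at x)"
    and k: "k > 0"
    and x0: "x0 < 1 / k" "\<forall>x. 0 < x \<and> x < x0 \<longrightarrow> f'' x / f' x - 2 * k / (1 - k * x) > 0"
    and y: "0 < y" "y < x0"
  shows "y * (1 - k * y) * f' y - f y > 0"
proof -
  define \<phi> where "\<phi> x = x * (1 - k * x) * f' x - f x" for x
  note \<phi>_mono = efficiency_numerator_strict_mono_near_zero[OF sig d1 d2 k x0, folded \<phi>_def]
  have \<phi>_lower: "- f x \<le> \<phi> x" if "0 < x" "x < x0" for x
  proof -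
    have "k * x < k * x0" "k * x0 < 1" using that k x0(1) by (simp_all add: field_simps)
    then have "0 < 1 - k * x" by simp
    moreover have "f' x \<ge> 0" using sigmoidal_deriv_nonneg[OF sig] d1 that by blast
    ultimately show ?thesis using that unfolding \<phi>_def by simp
  qed
  \<comment> \<open>\<phi> is increasing on ]0, x0[ and bounded below by - f, which tends to 0 at 0\<close>
  have "((\<lambda>x. - f x) \<longlongrightarrow> 0) (at_right 0)"
  proof -
    have "(f \<longlongrightarrow> 0) (at 0 within {0..})"
      using sig unfolding sigmoidal_def continuous_on_def by force
    then have "(f \<longlongrightarrow> 0) (at_right 0)"
      by (rule tendsto_within_subset) auto
    then show ?thesis using tendsto_minus by fastforce
  qed
  moreover have "\<forall>\<^sub>F x in at_right 0. - f x \<le> \<phi> (y / 2)"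
  proof -
    have "\<forall>\<^sub>F x in at_right 0. x \<in> {0<..<y / 2}"
      using eventually_at_right_real[of 0 "y / 2"] y by simp
    then show ?thesis
    proof eventually_elim
      case (elim x)
      then have "- f x \<le> \<phi> x" using \<phi>_lower y by simp
      also have "\<phi> x < \<phi> (y / 2)" using \<phi>_mono elim y by simp
      finally show ?case by simp
    qed
  qed
  ultimately have "0 \<le> \<phi> (y / 2)"
    by (rule tendsto_upperbound) simp
  also have "\<phi> (y / 2) < \<phi> y" using \<phi>_mono[of "y / 2" y] y by simp
  finally show ?thesis unfolding \<phi>_def .
qed

lemma operating_point_below_tangency:
  fixes k :: real
  assumes d1: "\<forall>x>0. (f has_real_derivative f' x) (at x)"
    and d2: "\<forall>x>0. (f' has_real_derivative f'' x) (at x)"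
    and k: "k > 0" and f_beta: "f \<beta> > 0"
    and beta: "\<beta> > 0" "\<beta> * f' \<beta> - f \<beta> = 0" "\<beta> < 1 / k"
    and near_zero: "0 < x0" "\<And>y. 0 < y \<Longrightarrow> y < x0 \<Longrightarrow> y * (1 - k * y) * f' y - f y > 0"
    and gamma: "0 < \<gamma>" "\<gamma> < 1 / k" "\<gamma> * (1 - k * \<gamma>) * f' \<gamma> - f \<gamma> = 0"
               "\<forall>x. 0 < x \<and> x < 1 / k \<and> x * (1 - k * x) * f' x - f x = 0 \<longrightarrow> x = \<gamma>"
  shows "\<gamma> < \<beta>" "\<And>x. \<gamma> < x \<Longrightarrow> x < 1 / k \<Longrightarrow> x * (1 - k * x) * f' x - f x < 0"
proof -
  define \<phi> where "\<phi> x = x * (1 - k * x) * f' x - f x" for x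
  have cont: "isCont \<phi> x" if "x > 0" for x
    unfolding \<phi>_def by (rule efficiency_numerator_isCont[OF d1 d2 that])
  have no_root: "\<phi> x \<noteq> 0" if "0 < x" "x < 1 / k" "x \<noteq> \<gamma>" for x
    using gamma(4) that unfolding \<phi>_def by blast
  have "\<phi> \<beta> = (1 - k * \<beta>) * (\<beta> * f' \<beta>) - f \<beta>"
    unfolding \<phi>_def by (simp add: algebra_simps)
  also have "\<dots> = - (k * \<beta> * f \<beta>)"
    using beta(2) by (simp add: algebra_simps)
  finally have \<phi>_beta: "\<phi> \<beta> < 0" using k beta(1) f_beta by simp
  show below: "\<gamma> < \<beta>"
  proof (rule ccontr)
    assume "\<not> \<gamma> < \<beta>"
    moreover have "\<gamma> \<noteq> \<beta>" using \<phi>_beta gamma(3) unfolding \<phi>_def by auto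
    ultimately have "\<beta> < \<gamma>" by simp
    define u where "u = min x0 \<beta> / 2"
    have u: "0 < u" "u < x0" using near_zero(1) beta(1) by (auto simp: u_def)
    have "\<phi> \<beta> > 0"
    proof (rule no_root_imp_pos[of 0 \<gamma> \<phi> u])
      show "\<phi> u > 0" using near_zero(2)[OF u] unfolding \<phi>_def .
    qed (use cont no_root gamma(2) \<open>\<beta> < \<gamma>\<close> beta(1) near_zero(1) in \<open>auto simp: u_def\<close>)
    with \<phi>_beta show False by simp
  qed
  show "x * (1 - k * x) * f' x - f x < 0" if "\<gamma> < x" "x < 1 / k" for x
  proof -
    have "(\<lambda>x. - \<phi> x) x > 0"
    proof (rule no_root_imp_pos[of \<gamma> "1 / k" "\<lambda>x. - \<phi> x" \<beta> x])
      show "isCont (\<lambda>x. - \<phi> x) y" if "\<gamma> < y" for y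
        using cont[of y] gamma(1) that by (intro continuous_intros) auto
    qed (use no_root below beta(3) \<phi>_beta that gamma(1) in auto)
    then show ?thesis unfolding \<phi>_def by simp
  qed
qed

lemma efficiency_operating_gt_nash:
  fixes k :: real
  assumes sig: "sigmoidal f"
    and d1: "\<forall>x>0. (f has_real_derivative f' x) (at x)"
    and d2: "\<forall>x>0. (f' has_real_derivative f'' x) (at x)"
    and k: "k > 0"
    and beta: "\<beta> > 0" "\<beta> * f' \<beta> - f \<beta> = 0" "k * \<beta> < 1"
    and x0: "\<exists>x0. 0 < x0 \<and> x0 < 1 / k \<and>
               (\<forall>x. 0 < x \<and> x < x0 \<longrightarrow> f'' x / f' x - 2 * k / (1 - k * x) > 0) \<and>
               (\<forall>x. x0 < x \<and> x < 1 / k \<longrightarrow> f'' x / f' x - 2 * k / (1 - k * x) < 0)"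
    and gamma: "0 < \<gamma>" "\<gamma> < 1 / k" "\<gamma> * (1 - k * \<gamma>) * f' \<gamma> - f \<gamma> = 0"
               "\<forall>x. 0 < x \<and> x < 1 / k \<and> x * (1 - k * x) * f' x - f x = 0 \<longrightarrow> x = \<gamma>"
  shows "(1 - k * \<beta>) / \<beta> * f \<beta> < (1 - k * \<gamma>) / \<gamma> * f \<gamma>"
proof -
  obtain x0 where "0 < x0" "x0 < 1 / k"
      "\<forall>x. 0 < x \<and> x < x0 \<longrightarrow> f'' x / f' x - 2 * k / (1 - k * x) > 0"
    using x0 by blast
  note near_zero = \<open>0 < x0\<close> efficiency_numerator_pos_near_zero[OF sig d1 d2 k this(2,3)]
  have "\<beta> < 1 / k" using beta(3) k by (simp add: field_simps)
  note below = operating_point_below_tangency[OF d1 d2 k sigmoidal_pos[OF sig beta(1)]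
      beta(1,2) this near_zero gamma]
  show ?thesis
    by (rule efficiency_strict_antimono[where f' = f'])
      (use d1 gamma(1) below \<open>\<beta> < 1 / k\<close> in auto)
qed

section \<open>Discounted comparison of payoff streams\<close>

lemma discount_weights_tail_sums:
  fixes lam :: real
  assumes "0 < lam" "lam < 1"
  shows "(\<lambda>m. if n < m then lam * (1 - lam) ^ m else 0) sums (1 - lam) ^ Suc n"
proof -
  have "(\<lambda>m. ((1 - lam) ^ Suc n * lam) * (1 - lam) ^ m) sums ((1 - lam) ^ Suc n * lam * (1 / (1 - (1 - lam))))"
    using assms by (intro sums_mult geometric_sums) auto
  then have "(\<lambda>m. if n < m + Suc n then lam * (1 - lam) ^ (m + Suc n) else 0) sums ((1 - lam) ^ Suc n)"
    using assms by (simp add: power_add mult_ac)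
  then have "(\<lambda>m. if n < m then lam * (1 - lam) ^ m else 0) sums
      ((1 - lam) ^ Suc n + (\<Sum>m<Suc n. if n < m then lam * (1 - lam) ^ m else 0))"
    by (subst (asm) sums_iff_shift)
  then show ?thesis by simp
qed

lemma discounted_sum_le_if_deterred:
  fixes a b :: "nat \<Rightarrow> real"
  assumes lam: "0 < lam" "lam < 1"
    and a_nonneg: "\<And>m. 0 \<le> a m" and b_bounds: "\<And>m. 0 \<le> b m" "\<And>m. b m \<le> M"
    and before: "\<And>m. m < n \<Longrightarrow> a m \<le> b m"
    and gain: "a n \<le> b n + A"
    and loss: "\<And>m. n < m \<Longrightarrow> a m \<le> b m - B"
    and deterred: "lam * A \<le> (1 - lam) * B"
  shows "(\<Sum>m. lam * (1 - lam) ^ m * a m) \<le> (\<Sum>m. lam * (1 - lam) ^ m * b m)"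
proof -
  define w where "w m = lam * (1 - lam) ^ m" for m
  \<comment> \<open>l m charges the gain A at stage n against the loss B at each later stage\<close>
  define l where "l m = (if m = n then - (w m * A) else 0) + (if n < m then w m else 0) * B" for m
  define L where "L = - (w n * A) + (1 - lam) ^ Suc n * B"
  have w_nonneg: "0 \<le> w m" for m unfolding w_def using lam by simp
  have b_summable: "summable (\<lambda>m. w m * b m)"
  proof (rule summable_comparison_test)
    show "summable (\<lambda>m. lam * M * (1 - lam) ^ m)"
      using lam by (intro summable_mult summable_geometric) auto
    show "\<exists>N. \<forall>m\<ge>N. norm (w m * b m) \<le> lam * M * (1 - lam) ^ m"
    proof (intro exI allI impI)
      fix m
      have "norm (w m * b m) = w m * b m" using w_nonneg b_bounds by simp
      also have "\<dots> \<le> w m * M" by (rule mult_left_mono[OF b_bounds(2) w_nonneg])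
      finally show "norm (w m * b m) \<le> lam * M * (1 - lam) ^ m" by (simp add: w_def mult_ac)
    qed
  qed
  have "l sums L"
    unfolding l_def L_def w_def by (intro sums_add sums_single sums_mult2 discount_weights_tail_sums lam)
  moreover have "L \<ge> 0"
  proof -
    have "L = (1 - lam) ^ n * ((1 - lam) * B - lam * A)" unfolding L_def w_def by (simp add: algebra_simps)
    then show ?thesis using deterred lam by simp
  qed
  moreover have "w m * a m \<le> w m * b m - l m" for m
  proof (cases n m rule: linorder_cases)
    case less
    then show ?thesis using mult_left_mono[OF loss w_nonneg] by (simp add: l_def algebra_simps)
  next
    case equal
    then show ?thesis using mult_left_mono[OF gain w_nonneg] by (simp add: l_def algebra_simps)
  next
    case greater
    then show ?thesis using mult_left_mono[OF before w_nonneg] by (simp add: l_def)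
  qed
  moreover have "0 \<le> w m * a m" for m using w_nonneg a_nonneg by simp
  ultimately have "(\<Sum>m. w m * a m) \<le> (\<Sum>m. w m * b m - l m)"
    using b_summable
    by (intro suminf_le summable_comparison_test[of "\<lambda>m. w m * a m" "\<lambda>m. w m * b m - l m"]
        summable_diff) (auto simp: sums_iff)
  also have "\<dots> = (\<Sum>m. w m * b m) - L"
    using suminf_diff[OF b_summable] \<open>l sums L\<close> by (auto simp: sums_iff)
  finally show ?thesis using \<open>L \<ge> 0\<close> unfolding w_def by simp
qed

lemma antimono_nat_pred_cases [consumes 1, case_names always never switch]:
  fixes P :: "nat \<Rightarrow> bool"
  assumes step: "\<forall>m. P (Suc m) \<longrightarrow> P m"
  obtains "\<forall>m. P m" | "\<forall>m. \<not> P m" | n where "\<forall>m\<le>n. P m" "\<forall>m>n. \<not> P m"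
proof -
  have down: "P m'" if "P m" "m' \<le> m" for m m'
    using that(2,1) by (induction rule: dec_induct) (use step in auto)
  consider "\<forall>m. P m" | "\<not> P 0" | "P 0" "\<exists>m. \<not> P m" by blast
  then show thesis
  proof cases
    case 3
    define n where "n = (LEAST m. \<not> P m) - 1"
    have "\<not> P (LEAST m. \<not> P m)" by (rule LeastI_ex[OF 3(2)])
    with 3(1) have "(LEAST m. \<not> P m) \<noteq> 0" by metis
    then have "\<not> P (Suc n)" "P n"
      using LeastI_ex[OF 3(2)] not_less_Least[of n "\<lambda>m. \<not> P m"] unfolding n_def by auto
    then show thesis using that(3)[of n] down by (metis Suc_leI not_le)
  qed (use that down in blast)+
qed

(* P m: no deviation has been observed before stage m; a stage of cooperation is worth c m * Ec,
   a stage of punishment c m * Ep. *)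
lemma grim_trigger_discounted_le:
  fixes u c :: "nat \<Rightarrow> real" and P :: "nat \<Rightarrow> bool" and lam A B C Ec Ep :: real
  assumes lam: "0 < lam" "lam < 1"
    and P_step: "\<And>m. P (Suc m) \<Longrightarrow> P m"
    and u_nonneg: "\<And>m. 0 \<le> u m" and c_bounds: "\<And>m. 0 \<le> c m" "\<And>m. c m \<le> C"
    and E: "0 \<le> Ep" "Ep \<le> Ec"
    and cooperation: "\<And>m. P (Suc m) \<Longrightarrow> u m \<le> c m * Ec"
    and deviation: "\<And>m. P m \<Longrightarrow> u m \<le> c m * Ec + A"
    and punishment: "\<And>m. \<not> P m \<Longrightarrow> u m \<le> c m * Ep"
    and loss: "\<And>m. c m * Ep \<le> c m * Ec - B"
    and deterred: "lam * A \<le> (1 - lam) * B"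
  shows "(\<Sum>m. lam * (1 - lam) ^ m * u m) \<le>
           (\<Sum>m. lam * (1 - lam) ^ m * (c m * (if P 0 then Ec else Ep)))"
proof -
  define b where "b m = c m * (if P 0 then Ec else Ep)" for m
  have b_bounds: "0 \<le> b m" "b m \<le> C * Ec" for m
    using c_bounds[of m] E by (auto simp: b_def intro: mult_mono)
  note compare = discounted_sum_le_if_deterred[OF lam u_nonneg b_bounds, folded b_def]
  have "\<forall>m. P (Suc m) \<longrightarrow> P m" using P_step by blast
  then have "(\<Sum>m. lam * (1 - lam) ^ m * u m) \<le> (\<Sum>m. lam * (1 - lam) ^ m * b m)"
  proof (cases rule: antimono_nat_pred_cases)
    case always
    then have "P (Suc m)" "P 0" for m by blast+
    then have "u m \<le> b m" for m using cooperation[of m] by (simp add: b_def)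
    then show ?thesis by (intro compare[where n = 0 and A = 0 and B = 0]) auto
  next
    case never
    then have "\<not> P m" for m by blast
    then have "u m \<le> b m" for m using punishment[of m] by (simp add: b_def)
    then show ?thesis by (intro compare[where n = 0 and A = 0 and B = 0]) auto
  next
    case (switch n)
    then have b_eq: "b m = c m * Ec" for m by (simp add: b_def)
    show ?thesis
    proof (rule compare[where n = n and A = A and B = B, OF _ _ _ deterred])
      show "u m \<le> b m" if "m < n" for m using switch cooperation[of m] that by (simp add: b_eq)
      show "u n \<le> b n + A" using switch deviation[of n] by (simp add: b_eq)
      show "u m \<le> b m - B" if "n < m" for m
        using switch punishment[of m] loss[of m] that by (simp add: b_eq)
    qed
  qed
  then show ?thesis unfolding b_def .
qed

lemma mult_le_of_le_divide_add:
  fixes lam n d :: real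
  assumes "0 < n" "0 < lam" "lam \<le> n / (n + d)"
  shows "lam * d \<le> (1 - lam) * n"
proof -
  have "0 < n + d"
  proof (rule ccontr)
    assume "\<not> 0 < n + d"
    then have "n / (n + d) \<le> 0" using assms(1) by (simp add: divide_nonneg_nonpos)
    with assms(2,3) show False by simp
  qed
  then have "lam * (n + d) \<le> n" using assms(3) by (simp add: field_simps)
  then show ?thesis by (simp add: algebra_simps)
qed

section \<open>The stage game against target powers\<close>

(* If all K players use these powers, each of them receives the SINR x. *)
definition target_power :: "nat \<Rightarrow> real \<Rightarrow> real \<Rightarrow> real \<Rightarrow> real" where
  "target_power K \<sigma>2 x h = \<sigma>2 / h * (x / (1 - (real K - 1) * x))"

definition symmetric_efficiency :: "nat \<Rightarrow> (real \<Rightarrow> real) \<Rightarrow> real \<Rightarrow> real" where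
  "symmetric_efficiency K f x = (1 - (real K - 1) * x) / x * f x"

definition coop_signal :: "nat \<Rightarrow> real \<Rightarrow> real \<Rightarrow> real" where
  "coop_signal K \<sigma>2 \<gamma> = \<sigma>2 + (\<Sum>j<K. \<sigma>2 * (\<gamma> / (1 - (real K - 1) * \<gamma>)))"

definition cooperative :: "nat \<Rightarrow> real \<Rightarrow> real \<Rightarrow> real list \<Rightarrow> bool" where
  "cooperative K \<sigma>2 \<gamma> ws \<longleftrightarrow> (\<forall>w\<in>set ws. w = coop_signal K \<sigma>2 \<gamma>)"

lemma trigger_eq_target_power:
  "trigger K \<sigma>2 \<beta> \<gamma> i t ws ps h = target_power K \<sigma>2 (if cooperative K \<sigma>2 \<gamma> ws then \<gamma> else \<beta>) h"
  unfolding trigger_def target_power_def cooperative_def coop_signal_def by simp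

lemma cooperative_snoc:
  "cooperative K \<sigma>2 \<gamma> (ws @ [w]) \<longleftrightarrow> cooperative K \<sigma>2 \<gamma> ws \<and> w = coop_signal K \<sigma>2 \<gamma>"
  unfolding cooperative_def by auto

lemma coop_signal_eq:
  "coop_signal K \<sigma>2 \<gamma> = \<sigma>2 / (1 - (real K - 1) * \<gamma>) + \<sigma>2 * (\<gamma> / (1 - (real K - 1) * \<gamma>))"
  if "(real K - 1) * \<gamma> \<noteq> 1"
proof -
  define q where "q = \<sigma>2 / (1 - (real K - 1) * \<gamma>)"
  have "\<sigma>2 = q * (1 - (real K - 1) * \<gamma>)" using that by (simp add: q_def)
  moreover have "coop_signal K \<sigma>2 \<gamma> = \<sigma>2 + real K * (q * \<gamma>)"
    unfolding coop_signal_def q_def by simp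
  ultimately have "coop_signal K \<sigma>2 \<gamma> = q + q * \<gamma>" by (simp add: algebra_simps)
  then show ?thesis by (simp add: q_def)
qed

context
  fixes K :: nat and \<sigma>2 x :: real and h p :: "nat \<Rightarrow> real" and i :: nat
  assumes i: "i < K" and no_pole: "(real K - 1) * x \<noteq> 1"
    and gains: "\<And>j. j < K \<Longrightarrow> h j \<noteq> 0"
    and others: "\<And>j. j < K \<Longrightarrow> j \<noteq> i \<Longrightarrow> p j = target_power K \<sigma>2 x (h j)"
begin

lemma interference_against_target:
  "(\<Sum>j\<in>{..<K} - {i}. p j * h j) + \<sigma>2 = \<sigma>2 / (1 - (real K - 1) * x)"
proof -
  have "(\<Sum>j\<in>{..<K} - {i}. p j * h j) = (\<Sum>j\<in>{..<K} - {i}. \<sigma>2 * (x / (1 - (real K - 1) * x)))"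
    using gains others by (intro sum.cong) (auto simp: target_power_def)
  also have "\<dots> = (real K - 1) * (\<sigma>2 * (x / (1 - (real K - 1) * x)))"
    using i by (simp add: of_nat_diff)
  finally show ?thesis using no_pole by (simp add: field_simps)
qed

lemma SINR_against_target:
  "SINR K \<sigma>2 h p i = p i * h i * (1 - (real K - 1) * x) / \<sigma>2"
  unfolding SINR_def interference_against_target by simp

lemma signal_against_target:
  "signal K \<sigma>2 h p = \<sigma>2 / (1 - (real K - 1) * x) + h i * p i"
proof -
  have "(\<Sum>j<K. h j * p j) = h i * p i + (\<Sum>j\<in>{..<K} - {i}. p j * h j)"
    using i by (subst sum.remove[of "{..<K}" i]) (auto simp: mult.commute)
  then show ?thesis
    using interference_against_target unfolding signal_def by simp
qed

lemma utility_at_target: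
  assumes "\<sigma>2 \<noteq> 0" and "p i = target_power K \<sigma>2 x (h i)"
  shows "utility K \<sigma>2 f R h p i = R i * h i / \<sigma>2 * symmetric_efficiency K f x"
proof -
  define d where "d = 1 - (real K - 1) * x"
  have "d \<noteq> 0" using no_pole unfolding d_def by simp
  have "p i * h i = \<sigma>2 * (x / d)"
    using assms(2) gains[OF i] unfolding target_power_def d_def by simp
  then have "SINR K \<sigma>2 h p i = \<sigma>2 * (x / d) * d / \<sigma>2"
    unfolding SINR_against_target d_def by simp
  also have "\<dots> = x" using \<open>d \<noteq> 0\<close> assms(1) by simp
  finally have sinr: "SINR K \<sigma>2 h p i = x" .
  have "utility K \<sigma>2 f R h p i = R i * f x / (\<sigma>2 / h i * (x / d))"
    using assms(2) unfolding utility_def sinr target_power_def d_def by simp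
  then show ?thesis
    using assms(1) gains[OF i] \<open>d \<noteq> 0\<close> unfolding symmetric_efficiency_def d_def[symmetric]
    by (cases "x = 0") (simp_all add: field_simps)
qed

lemma utility_le_against_target:
  assumes "\<sigma>2 > 0" "h i > 0" "1 - (real K - 1) * x > 0" "R i \<ge> 0" "p i \<ge> 0" "\<beta> > 0"
    and ratio: "\<And>y. y > 0 \<Longrightarrow> f y / y \<le> f \<beta> / \<beta>"
    and f_nonneg: "\<And>y. y \<ge> 0 \<Longrightarrow> f y \<ge> 0"
  shows "utility K \<sigma>2 f R h p i \<le> R i * h i / \<sigma>2 * ((1 - (real K - 1) * x) * (f \<beta> / \<beta>))"
    and "utility K \<sigma>2 f R h p i \<ge> 0"
proof -
  define c where "c = h i * (1 - (real K - 1) * x) / \<sigma>2"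
  have c: "c > 0" using assms unfolding c_def by simp
  have sinr: "SINR K \<sigma>2 h p i = p i * c" unfolding SINR_against_target c_def by simp
  show "utility K \<sigma>2 f R h p i \<ge> 0"
    unfolding utility_def sinr using f_nonneg[of "p i * c"] c assms by simp
  show "utility K \<sigma>2 f R h p i \<le> R i * h i / \<sigma>2 * ((1 - (real K - 1) * x) * (f \<beta> / \<beta>))"
  proof (cases "p i = 0")
    case True
    have "0 \<le> R i * h i / \<sigma>2 * ((1 - (real K - 1) * x) * (f \<beta> / \<beta>))"
      using f_nonneg[of \<beta>] assms by simp
    then show ?thesis using True unfolding utility_def by simp
  next
    case False
    then have "f (p i * c) / p i = f (p i * c) / (p i * c) * c" using c by simp
    also have "\<dots> \<le> f \<beta> / \<beta> * c"
      using ratio[of "p i * c"] False c assms by (intro mult_right_mono) auto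
    finally have "R i * (f (p i * c) / p i) \<le> R i * (f \<beta> / \<beta> * c)"
      using assms by (intro mult_left_mono) auto
    then show ?thesis unfolding utility_def sinr c_def by (simp add: field_simps)
  qed
qed

end

section \<open>Play of the trigger strategies\<close>

lemma length_history: "length (fst (history K \<sigma>2 \<tau> G h0 m)) = length (fst h0) + m"
  by (induction m) (auto simp: split_beta Let_def)

lemma profile_eq:
  "profile K \<sigma>2 \<tau> G h0 m j =
     \<tau> j (length (fst h0) + m) (fst (history K \<sigma>2 \<tau> G h0 m)) (snd (history K \<sigma>2 \<tau> G h0 m) j)
       (G (length (fst h0) + m) j)"
  unfolding profile_def by (simp add: split_beta Let_def length_history)

lemma fst_history_Suc:
  "fst (history K \<sigma>2 \<tau> G h0 (Suc m)) =
     fst (history K \<sigma>2 \<tau> G h0 m) @ [signal K \<sigma>2 (G (length (fst h0) + m)) (profile K \<sigma>2 \<tau> G h0 m)]"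
  by (simp add: split_beta Let_def profile_def length_history)

lemma cooperative_history_Suc:
  "cooperative K \<sigma>2 \<gamma> (fst (history K \<sigma>2 \<tau> G h0 (Suc m))) \<longleftrightarrow>
     cooperative K \<sigma>2 \<gamma> (fst (history K \<sigma>2 \<tau> G h0 m)) \<and>
     signal K \<sigma>2 (G (length (fst h0) + m)) (profile K \<sigma>2 \<tau> G h0 m) = coop_signal K \<sigma>2 \<gamma>"
  unfolding fst_history_Suc cooperative_snoc ..

lemma profile_trigger:
  assumes "\<tau> j = trigger K \<sigma>2 \<beta> \<gamma> j"
  shows "profile K \<sigma>2 \<tau> G h0 m j =
    target_power K \<sigma>2 (if cooperative K \<sigma>2 \<gamma> (fst (history K \<sigma>2 \<tau> G h0 m)) then \<gamma> else \<beta>)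
      (G (length (fst h0) + m) j)"
  unfolding profile_eq assms trigger_eq_target_power ..

lemma cooperative_trigger_history:
  assumes "K > 0" "(real K - 1) * \<gamma> \<noteq> 1" "\<And>t j. j < K \<Longrightarrow> G t j \<noteq> 0"
  shows "cooperative K \<sigma>2 \<gamma> (fst (history K \<sigma>2 (trigger K \<sigma>2 \<beta> \<gamma>) G h0 m)) \<longleftrightarrow>
           cooperative K \<sigma>2 \<gamma> (fst h0)"
proof (induction m)
  case (Suc m)
  let ?t = "length (fst h0) + m" and ?p = "profile K \<sigma>2 (trigger K \<sigma>2 \<beta> \<gamma>) G h0 m"
  have "signal K \<sigma>2 (G ?t) ?p = coop_signal K \<sigma>2 \<gamma>"
    if "cooperative K \<sigma>2 \<gamma> (fst (history K \<sigma>2 (trigger K \<sigma>2 \<beta> \<gamma>) G h0 m))"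
  proof -
    have p: "?p j = target_power K \<sigma>2 \<gamma> (G ?t j)" for j
      using profile_trigger[of "trigger K \<sigma>2 \<beta> \<gamma>" j] that by simp
    have "signal K \<sigma>2 (G ?t) ?p = \<sigma>2 / (1 - (real K - 1) * \<gamma>) + G ?t 0 * ?p 0"
      by (rule signal_against_target[of 0]) (use assms p in auto)
    then show ?thesis
      using coop_signal_eq[OF assms(2)] assms(1,3) by (simp add: p target_power_def)
  qed
  then show ?case using Suc by (auto simp del: history.simps simp: cooperative_history_Suc)
qed simp

lemma payoff_trigger:
  assumes i: "i < K" and sigma: "\<sigma>2 \<noteq> 0" and gains: "\<And>t j. j < K \<Longrightarrow> G t j \<noteq> 0"
    and no_pole: "(real K - 1) * \<beta> \<noteq> 1" "(real K - 1) * \<gamma> \<noteq> 1"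
  shows "payoff K \<sigma>2 f R lam (trigger K \<sigma>2 \<beta> \<gamma>) G h0 i =
    (\<Sum>m. lam * (1 - lam) ^ m * (R i * G (length (fst h0) + m) i / \<sigma>2 *
      symmetric_efficiency K f (if cooperative K \<sigma>2 \<gamma> (fst h0) then \<gamma> else \<beta>)))"
proof -
  let ?x = "if cooperative K \<sigma>2 \<gamma> (fst h0) then \<gamma> else \<beta>"
  have "profile K \<sigma>2 (trigger K \<sigma>2 \<beta> \<gamma>) G h0 m j = target_power K \<sigma>2 ?x (G (length (fst h0) + m) j)"
    for m j
    using profile_trigger[of "trigger K \<sigma>2 \<beta> \<gamma>" j] cooperative_trigger_history[of K \<gamma> G] i no_pole(2) gains
    by simp
  then have "utility K \<sigma>2 f R (G (length (fst h0) + m)) (profile K \<sigma>2 (trigger K \<sigma>2 \<beta> \<gamma>) G h0 m) i =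
    R i * G (length (fst h0) + m) i / \<sigma>2 * symmetric_efficiency K f ?x" for m
    by (intro utility_at_target) (use i sigma gains no_pole in auto)
  then show ?thesis unfolding payoff_def by simp
qed

lemma deviation_stage_utility:
  fixes K i m :: nat and \<sigma>2 \<beta> \<gamma> :: real and s :: strategy
    and h0 :: "real list \<times> (nat \<Rightarrow> real list)"
  defines "\<tau> \<equiv> (trigger K \<sigma>2 \<beta> \<gamma>)(i := s)"
  defines "t \<equiv> length (fst h0) + m"
  assumes i: "i < K" and sigma: "\<sigma>2 > 0" and gains: "\<And>n j. j < K \<Longrightarrow> G n j > 0" and R: "R i \<ge> 0"
    and beta: "\<beta> > 0" "(real K - 1) * \<beta> < 1" and gamma: "(real K - 1) * \<gamma> < 1"
    and ratio: "\<And>y. y > 0 \<Longrightarrow> f y / y \<le> f \<beta> / \<beta>" and f_nonneg: "\<And>y. y \<ge> 0 \<Longrightarrow> f y \<ge> 0"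
    and s_nonneg: "\<And>n ws ps. 0 \<le> s n ws ps (G n i)"
  shows "utility K \<sigma>2 f R (G t) (profile K \<sigma>2 \<tau> G h0 m) i \<le> R i * G t i / \<sigma>2 *
           ((1 - (real K - 1) * (if cooperative K \<sigma>2 \<gamma> (fst (history K \<sigma>2 \<tau> G h0 m)) then \<gamma> else \<beta>))
            * (f \<beta> / \<beta>))"
    and "0 \<le> utility K \<sigma>2 f R (G t) (profile K \<sigma>2 \<tau> G h0 m) i"
    and "cooperative K \<sigma>2 \<gamma> (fst (history K \<sigma>2 \<tau> G h0 (Suc m))) \<Longrightarrow>
           utility K \<sigma>2 f R (G t) (profile K \<sigma>2 \<tau> G h0 m) i = R i * G t i / \<sigma>2 * symmetric_efficiency K f \<gamma>"
proof -
  let ?coop = "cooperative K \<sigma>2 \<gamma> (fst (history K \<sigma>2 \<tau> G h0 m))"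
  let ?x = "if ?coop then \<gamma> else \<beta>" and ?p = "profile K \<sigma>2 \<tau> G h0 m"
  have others: "?p j = target_power K \<sigma>2 ?x (G t j)" if "j < K" "j \<noteq> i" for j
    using profile_trigger[of \<tau> j] that(2) unfolding \<tau>_def t_def by simp
  have no_pole: "(real K - 1) * ?x \<noteq> 1" "1 - (real K - 1) * ?x > 0" using beta gamma by auto
  have G_nonzero: "G t j \<noteq> 0" if "j < K" for j using gains[OF that, of t] by simp
  have "?p i \<ge> 0" using s_nonneg unfolding profile_eq \<tau>_def t_def by simp
  then show "utility K \<sigma>2 f R (G t) ?p i \<le> R i * G t i / \<sigma>2 * ((1 - (real K - 1) * ?x) * (f \<beta> / \<beta>))"
    and "0 \<le> utility K \<sigma>2 f R (G t) ?p i"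
    using utility_le_against_target[where h = "G t" and p = ?p and x = ?x and f = f and \<beta> = \<beta> and R = R and i = i, OF i no_pole(1) G_nonzero others sigma gains[OF i, of t] no_pole(2) R _ beta(1)
        ratio f_nonneg] by auto
  assume "cooperative K \<sigma>2 \<gamma> (fst (history K \<sigma>2 \<tau> G h0 (Suc m)))"
  then have coop: ?coop and "signal K \<sigma>2 (G t) ?p = coop_signal K \<sigma>2 \<gamma>"
    unfolding cooperative_history_Suc t_def by auto
  moreover have "signal K \<sigma>2 (G t) ?p = \<sigma>2 / (1 - (real K - 1) * ?x) + G t i * ?p i"
    by (rule signal_against_target[where h = "G t" and p = ?p and x = ?x, OF i no_pole(1) G_nonzero others])
  ultimately have "G t i * ?p i = \<sigma>2 * (\<gamma> / (1 - (real K - 1) * \<gamma>))"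
    using coop_signal_eq[of K \<gamma> \<sigma>2] gamma by simp
  then have "?p i = \<sigma>2 * (\<gamma> / (1 - (real K - 1) * \<gamma>)) / G t i"
    using G_nonzero[OF i] by (metis nonzero_mult_div_cancel_left)
  then have "?p i = target_power K \<sigma>2 \<gamma> (G t i)"
    unfolding target_power_def by simp
  then show "utility K \<sigma>2 f R (G t) ?p i = R i * G t i / \<sigma>2 * symmetric_efficiency K f \<gamma>"
    using utility_at_target[where h = "G t" and p = ?p and x = ?x, OF i no_pole(1) G_nonzero others] sigma coop
    by simp
qed

lemma deviation_gain_le:
  fixes K :: nat and \<beta> \<gamma> c c\<^sub>m\<^sub>a\<^sub>x :: real and f :: "real \<Rightarrow> real"
  defines "\<delta> \<equiv> symmetric_efficiency K f \<gamma> - symmetric_efficiency K f \<beta>"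
  assumes K: "K \<ge> 1" and beta: "\<beta> > 0" and gamma: "\<gamma> > 0"
    and ratio: "f \<gamma> / \<gamma> \<le> f \<beta> / \<beta>" and f_gamma: "f \<gamma> \<ge> 0"
    and c: "0 \<le> c" "c \<le> c\<^sub>m\<^sub>a\<^sub>x"
  shows "c * ((1 - (real K - 1) * \<gamma>) * (f \<beta> / \<beta>))
           \<le> c * symmetric_efficiency K f \<gamma> + c\<^sub>m\<^sub>a\<^sub>x * ((real K - 1) * f \<beta> - \<delta>)"
proof -
  define r q k where "r = f \<beta> / \<beta>" and "q = f \<gamma> / \<gamma>" and "k = (real K - 1) * \<gamma>"
  have eff_\<gamma>: "symmetric_efficiency K f \<gamma> = (1 - k) * q"
    unfolding symmetric_efficiency_def q_def k_def by simp
  have gap: "(real K - 1) * f \<beta> - \<delta> = r - (1 - k) * q"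
    unfolding \<delta>_def eff_\<gamma> unfolding symmetric_efficiency_def r_def using beta by (simp add: field_simps)
  have "0 \<le> q" "q \<le> r" "0 \<le> k" using K gamma ratio f_gamma unfolding q_def r_def k_def by simp_all
  then have "0 \<le> k * q" "0 \<le> k * r" by simp_all
  then have "(1 - k) * r \<le> (1 - k) * q + (r - (1 - k) * q)" "0 \<le> r - (1 - k) * q"
    using \<open>q \<le> r\<close> by (simp_all add: algebra_simps)
  then have "c * ((1 - k) * r) \<le> c * ((1 - k) * q) + c\<^sub>m\<^sub>a\<^sub>x * (r - (1 - k) * q)"
    using mult_left_mono[of _ _ c] mult_right_mono[OF c(2)] c(1) by (smt (verit) distrib_left)
  then show ?thesis unfolding gap eff_\<gamma> k_def r_def .
qed

lemma trigger_deviation_unprofitable: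
  fixes K i :: nat and \<sigma>2 lam \<beta> \<gamma> \<delta> :: real and s :: strategy
  assumes i: "i < K" and sigma: "\<sigma>2 > 0" and R: "R i > 0"
    and gains: "admissible_gains K \<eta>min \<eta>max G" and eta: "\<forall>j<K. 0 < \<eta>min j"
    and s: "valid_strategy Pmax \<eta>min \<eta>max i s"
    and ratio: "\<And>x. x > 0 \<Longrightarrow> f x / x \<le> f \<beta> / \<beta>" and f_nonneg: "\<And>x. x \<ge> 0 \<Longrightarrow> f x \<ge> 0"
    and beta: "0 < \<beta>" "(real K - 1) * \<beta> < 1" and gamma: "0 < \<gamma>" "(real K - 1) * \<gamma> < 1"
    and delta: "\<delta> = symmetric_efficiency K f \<gamma> - symmetric_efficiency K f \<beta>" "0 < \<delta>"
    and lam: "0 < lam" "lam < 1"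
    and deterred: "lam * (\<eta>max i * ((real K - 1) * f \<beta> - \<delta>)) \<le> (1 - lam) * (\<eta>min i * \<delta>)"
  shows "payoff K \<sigma>2 f R lam ((trigger K \<sigma>2 \<beta> \<gamma>)(i := s)) G h0 i
           \<le> payoff K \<sigma>2 f R lam (trigger K \<sigma>2 \<beta> \<gamma>) G h0 i"
proof -
  define \<tau> where "\<tau> = (trigger K \<sigma>2 \<beta> \<gamma>)(i := s)"
  define t where "t m = length (fst h0) + m" for m
  define c where "c m = R i * G (t m) i / \<sigma>2" for m
  define P where "P m = cooperative K \<sigma>2 \<gamma> (fst (history K \<sigma>2 \<tau> G h0 m))" for m
  define u where "u m = utility K \<sigma>2 f R (G (t m)) (profile K \<sigma>2 \<tau> G h0 m) i" for m
  have G_pos: "0 < G n j" if "j < K" for n j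
    using gains eta that unfolding admissible_gains_def by (meson less_le_trans)
  have G_i: "\<eta>min i \<le> G n i" "G n i \<le> \<eta>max i" for n
    using gains i unfolding admissible_gains_def by auto
  have c: "0 \<le> c m" "c m \<le> R i * \<eta>max i / \<sigma>2" "R i * \<eta>min i / \<sigma>2 \<le> c m" for m
    unfolding c_def using G_pos[OF i, of "t m"] G_i[of "t m"] R sigma by (simp_all add: divide_right_mono)
  have s_nonneg: "0 \<le> s n ws ps (G n i)" for n ws ps
    using s G_i unfolding valid_strategy_def by blast
  note dev = deviation_stage_utility[where K = K and i = i and G = G and R = R
      and \<beta> = \<beta> and \<gamma> = \<gamma> and f = f and s = s and ?h0.0 = h0,
      OF i sigma G_pos less_imp_le[OF R] beta gamma(2) ratio f_nonneg s_nonneg]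
  have stage: "u m \<le> c m * ((1 - (real K - 1) * (if P m then \<gamma> else \<beta>)) * (f \<beta> / \<beta>))"
    "0 \<le> u m" "P (Suc m) \<Longrightarrow> u m = c m * symmetric_efficiency K f \<gamma>" for m
    unfolding u_def c_def P_def t_def \<tau>_def by (simp_all only: dev)
  have "(\<Sum>m. lam * (1 - lam) ^ m * u m) \<le>
      (\<Sum>m. lam * (1 - lam) ^ m *
         (c m * (if P 0 then symmetric_efficiency K f \<gamma> else symmetric_efficiency K f \<beta>)))"
  proof (rule grim_trigger_discounted_le[where C = "R i * \<eta>max i / \<sigma>2"
        and A = "R i * \<eta>max i / \<sigma>2 * ((real K - 1) * f \<beta> - \<delta>)"
        and B = "R i * \<eta>min i / \<sigma>2 * \<delta>"])
    show "P m" if "P (Suc m)" for m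
      using that unfolding P_def cooperative_history_Suc by simp
    show "u m \<le> c m * symmetric_efficiency K f \<gamma> + R i * \<eta>max i / \<sigma>2 * ((real K - 1) * f \<beta> - \<delta>)"
      if "P m" for m
    proof -
      have "1 \<le> K" using i by simp
      from deviation_gain_le[where c = "c m", OF this beta(1) gamma(1) ratio[OF gamma(1)]
          f_nonneg[OF less_imp_le[OF gamma(1)]] c(1,2)]
      show ?thesis using stage(1)[of m] that unfolding delta(1) by simp
    qed
    show "u m \<le> c m * symmetric_efficiency K f \<beta>" if "\<not> P m" for m
      using stage(1)[of m] that unfolding symmetric_efficiency_def by simp
    show "c m * symmetric_efficiency K f \<beta> \<le> c m * symmetric_efficiency K f \<gamma> - R i * \<eta>min i / \<sigma>2 * \<delta>"
      for m
      using mult_right_mono[OF c(3)[of m] less_imp_le[OF delta(2)]] unfolding delta(1)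
      by (simp add: algebra_simps)
    show "lam * (R i * \<eta>max i / \<sigma>2 * ((real K - 1) * f \<beta> - \<delta>))
        \<le> (1 - lam) * (R i * \<eta>min i / \<sigma>2 * \<delta>)"
      using mult_left_mono[OF deterred, of "R i / \<sigma>2"] R sigma by (simp add: field_simps)
    show "0 \<le> symmetric_efficiency K f \<beta>"
      using f_nonneg[of \<beta>] beta unfolding symmetric_efficiency_def by simp
  qed (use lam stage(2,3) c(1,2) delta in auto)
  moreover have "payoff K \<sigma>2 f R lam (trigger K \<sigma>2 \<beta> \<gamma>) G h0 i = (\<Sum>m. lam * (1 - lam) ^ m *
      (c m * symmetric_efficiency K f (if cooperative K \<sigma>2 \<gamma> (fst h0) then \<gamma> else \<beta>)))"
    unfolding c_def t_def
    by (rule payoff_trigger) (use i sigma G_pos beta gamma in \<open>auto dest: less_imp_neq[symmetric]\<close>)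
  moreover have "P 0 = cooperative K \<sigma>2 \<gamma> (fst h0)" unfolding P_def by simp
  moreover have "payoff K \<sigma>2 f R lam \<tau> G h0 i = (\<Sum>m. lam * (1 - lam) ^ m * u m)"
    unfolding payoff_def u_def t_def ..
  ultimately show ?thesis unfolding \<tau>_def by (simp add: if_distrib)
qed

theorem theorem9:
  fixes K :: nat and \<sigma>2 lam \<beta> \<gamma> :: real
    and R Pmax \<eta>min \<eta>max :: "nat \<Rightarrow> real"
    and f f' f'' :: "real \<Rightarrow> real"
  assumes K: "K \<ge> 2"
    and sigma: "\<sigma>2 > 0"
    and R: "\<forall>i<K. R i > 0"
    and eta: "\<forall>i<K. 0 < \<eta>min i \<and> \<eta>min i \<le> \<eta>max i"
    and sig: "sigmoidal f"
    and d1: "\<forall>x>0. (f has_real_derivative f' x) (at x)"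
    and d2: "\<forall>x>0. (f' has_real_derivative f'' x) (at x)"
    and beta: "\<beta> > 0" "\<beta> * f' \<beta> - f \<beta> = 0" "\<forall>x>0. x * f' x - f x = 0 \<longrightarrow> x = \<beta>"
    and beta_K: "(real K - 1) * \<beta> < 1"
    and x0: "\<exists>x0. 0 < x0 \<and> x0 < 1 / (real K - 1) \<and>
               (\<forall>x. 0 < x \<and> x < x0 \<longrightarrow> f'' x / f' x - 2 * (real K - 1) / (1 - (real K - 1) * x) > 0) \<and>
               (\<forall>x. x0 < x \<and> x < 1 / (real K - 1) \<longrightarrow> f'' x / f' x - 2 * (real K - 1) / (1 - (real K - 1) * x) < 0)"
    and gamma: "0 < \<gamma>" "\<gamma> < 1 / (real K - 1)"
               "\<gamma> * (1 - (real K - 1) * \<gamma>) * f' \<gamma> - f \<gamma> = 0"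
               "\<forall>x. 0 < x \<and> x < 1 / (real K - 1) \<and> x * (1 - (real K - 1) * x) * f' x - f x = 0 \<longrightarrow> x = \<gamma>"
    and pow_nash: "\<forall>i<K. \<forall>h. \<eta>min i \<le> h \<and> h \<le> \<eta>max i \<longrightarrow>
                     0 \<le> \<sigma>2 / h * (\<beta> / (1 - (real K - 1) * \<beta>)) \<and> \<sigma>2 / h * (\<beta> / (1 - (real K - 1) * \<beta>)) \<le> Pmax i"
    and pow_op: "\<forall>i<K. \<forall>h. \<eta>min i \<le> h \<and> h \<le> \<eta>max i \<longrightarrow>
                     0 \<le> \<sigma>2 / h * (\<gamma> / (1 - (real K - 1) * \<gamma>)) \<and> \<sigma>2 / h * (\<gamma> / (1 - (real K - 1) * \<gamma>)) \<le> Pmax i"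
    and lam: "0 < lam" "lam < 1"
    and lam_bound: "\<forall>i<K. let \<delta> = (1 - (real K - 1) * \<gamma>) / \<gamma> * f \<gamma> - (1 - (real K - 1) * \<beta>) / \<beta> * f \<beta>
                      in lam \<le> \<eta>min i * \<delta> / (\<eta>min i * \<delta> + \<eta>max i * ((real K - 1) * f \<beta> - \<delta>))"
  shows "subgame_perfect K \<sigma>2 f R Pmax \<eta>min \<eta>max lam (trigger K \<sigma>2 \<beta> \<gamma>)"
proof -
  define \<delta> where "\<delta> = symmetric_efficiency K f \<gamma> - symmetric_efficiency K f \<beta>"
  have k: "real K - 1 > 0" using K by simp
  have gamma_K: "(real K - 1) * \<gamma> < 1" using gamma(2) k by (simp add: field_simps)
  have delta: "0 < \<delta>"
    using efficiency_operating_gt_nash[OF sig d1 d2 k beta(1,2) beta_K x0 gamma]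
    unfolding \<delta>_def symmetric_efficiency_def by simp
  have ratio: "f x / x \<le> f \<beta> / \<beta>" if "x > 0" for x
    using sigmoidal_ratio_le_tangency[OF sig d1 d2 beta(1,3) that] .
  show ?thesis
    unfolding subgame_perfect_def
  proof (intro conjI allI impI)
    fix i assume "i < K"
    then show "valid_strategy Pmax \<eta>min \<eta>max i (trigger K \<sigma>2 \<beta> \<gamma> i)"
      using pow_nash pow_op unfolding valid_strategy_def trigger_def by auto
  next
    fix G n q i s
    assume G: "admissible_gains K \<eta>min \<eta>max G" and i: "i < K"
      and s: "valid_strategy Pmax \<eta>min \<eta>max i s"
    have "lam * (\<eta>max i * ((real K - 1) * f \<beta> - \<delta>)) \<le> (1 - lam) * (\<eta>min i * \<delta>)"
      using mult_le_of_le_divide_add[of "\<eta>min i * \<delta>" lam] lam_bound eta i delta lam(1)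
      unfolding \<delta>_def symmetric_efficiency_def Let_def by simp
    then show "payoff K \<sigma>2 f R lam ((trigger K \<sigma>2 \<beta> \<gamma>)(i := s)) G (past_history K \<sigma>2 G q n) i
        \<le> payoff K \<sigma>2 f R lam (trigger K \<sigma>2 \<beta> \<gamma>) G (past_history K \<sigma>2 G q n) i"
      using trigger_deviation_unprofitable[OF i sigma _ G _ s ratio sigmoidal_nonneg[OF sig]
          beta(1) beta_K gamma(1) gamma_K \<delta>_def delta lam] R eta i by blast
  qed
qed

end
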